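(* Let $X$ be a Hausdorff space and define $\Phi(X)=\sup\{L(X\setminus\{x\}) : x\in X\}$. Then $\Phi(X)=L(X)\cdot\psi(X)$.
   Context: $L(Y)$ denotes the Lindelöf number of $Y$ (least infinite cardinal $\mu$ such that every open cover of $Y$ has a subcover of size at most $\mu$), and $\psi(Y)$ the pseudocharacter (least infinite $\mu$ such that every point of $Y$ is the intersection of at most $\mu$ open sets); $X\setminus\{x\}$ carries the subspace topology. All cardinal functions are taken to be infinite. *)

theory Defs
  imports "HOL-Analysis.Analysis"
begin

text \<open>Cardinals are represented as cardinal orders (HOL BNF cardinals). An infinite
cardinal is a cardinal order with infinite field.\<close>

definition inf_card :: "'k rel \<Rightarrow> bool" where
  "inf_card \<kappa> \<longleftrightarrow> Card_order \<kappa> \<and> infinite (Field \<kappa>)"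

definition lindelof_le :: "'a topology \<Rightarrow> 'k rel \<Rightarrow> bool" where
  "lindelof_le Y \<kappa> \<longleftrightarrow>
     (\<forall>U. (\<forall>u\<in>U. openin Y u) \<and> topspace Y \<subseteq> \<Union>U \<longrightarrow>
        (\<exists>V\<subseteq>U. topspace Y \<subseteq> \<Union>V \<and> ordLeq3 (card_of V) \<kappa>))"

definition pseudochar_le :: "'a topology \<Rightarrow> 'k rel \<Rightarrow> bool" where
  "pseudochar_le Y \<kappa> \<longleftrightarrow>
     (\<forall>y\<in>topspace Y. \<exists>W. W \<noteq> {} \<and> (\<forall>w\<in>W. openin Y w) \<and> \<Inter>W = {y}
        \<and> ordLeq3 (card_of W) \<kappa>)"

definition is_lindelof_number :: "'a topology \<Rightarrow> 'k rel \<Rightarrow> bool" where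
  "is_lindelof_number Y \<mu> \<longleftrightarrow> inf_card \<mu> \<and> lindelof_le Y \<mu> \<and>
     (\<forall>\<kappa>::'k rel. inf_card \<kappa> \<and> lindelof_le Y \<kappa> \<longrightarrow> ordLeq3 \<mu> \<kappa>)"

definition is_pseudocharacter :: "'a topology \<Rightarrow> 'k rel \<Rightarrow> bool" where
  "is_pseudocharacter Y \<mu> \<longleftrightarrow> inf_card \<mu> \<and> pseudochar_le Y \<mu> \<and>
     (\<forall>\<kappa>::'k rel. inf_card \<kappa> \<and> pseudochar_le Y \<kappa> \<longrightarrow> ordLeq3 \<mu> \<kappa>)"

text \<open>mu is Phi(X) = sup { L(X - {x}) : x in X } (as an infinite cardinal): the least
infinite cardinal kappa with L(X - {x}) <= kappa for every x in X. For an infinite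
cardinal kappa, L(Y) <= kappa holds exactly when lindelof_le Y kappa, which is how the
upper-bound condition is expressed (this avoids requiring each L(X - {x}) to be
represented on the type 'k).\<close>
definition is_Phi :: "'a topology \<Rightarrow> 'k rel \<Rightarrow> bool" where
  "is_Phi X \<mu> \<longleftrightarrow>
     inf_card \<mu> \<and>
     (\<forall>x\<in>topspace X. lindelof_le (subtopology X (topspace X - {x})) \<mu>) \<and>
     (\<forall>\<kappa>::'k rel. inf_card \<kappa> \<and>
        (\<forall>x\<in>topspace X. lindelof_le (subtopology X (topspace X - {x})) \<kappa>)
        \<longrightarrow> ordLeq3 \<mu> \<kappa>)"

end

theory Submission
  imports Defs
begin

(*
  All three cardinal functions are characterised by "<= kappa" properties, so the
  theorem reduces to comparing these properties for a single infinite cardinal k: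

    (a) L(X) <= k and psi(X) <= k  imply  L(X - {x}) <= k for every x:
        X - {x} is the union of the <= k closed sets X - w, w an open set from a
        pseudobase at x, and each closed subset of X has Lindeloef number <= L(X);
    (b) L(X - {x}) <= k for all x implies L(X) <= k (add one set covering x);
    (c) for Hausdorff X, L(X - {x}) <= k implies psi(x, X) <= k: separate x from each
        y /= x by disjoint open sets A_y, B_y; <= k of the B_y cover X - {x}, and
        the corresponding A_y intersect to {x}.

  Since the product of two infinite cardinals is their maximum m, (a) gives
  Phi(X) <= m, while (b) and (c) give L(X) <= Phi(X) and psi(X) <= Phi(X).
*)

unbundle cardinal_syntax

section \<open>Cardinal arithmetic below an infinite cardinal\<close>

lemma card_le_Field_iff:
  assumes "Card_order k"
  shows "|A| \<le>o k \<longleftrightarrow> |A| \<le>o |Field k|"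
  using assms by (meson card_of_Field_ordIso ordIso_symmetric ordLeq_ordIso_trans)

lemma inf_card_finite_le:
  assumes "inf_card k" "finite A"
  shows "|A| \<le>o k"
proof -
  have "|A| <o |Field k|"
    using assms by (intro finite_ordLess_infinite)
      (auto simp: inf_card_def Field_card_of card_of_well_order_on)
  then show ?thesis
    using assms(1) card_le_Field_iff ordLess_imp_ordLeq unfolding inf_card_def by blast
qed

lemma inf_card_Un_le:
  assumes "inf_card k" "|A| \<le>o k" "|B| \<le>o k"
  shows "|A \<union> B| \<le>o k"
  using assms card_of_Un_ordLeq_infinite_Field unfolding inf_card_def by blast

lemma inf_card_UN_le:
  assumes "inf_card k" "|I| \<le>o k" "\<forall>i\<in>I. |A i| \<le>o k"
  shows "|\<Union>i\<in>I. A i| \<le>o k"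
  using assms card_of_UNION_ordLeq_infinite[of "Field k" I A] card_le_Field_iff
  unfolding inf_card_def by metis

lemma inf_card_insert_le:
  assumes "inf_card k" "|A| \<le>o k"
  shows "|insert a A| \<le>o k"
  using inf_card_Un_le[OF assms(1) inf_card_finite_le[OF assms(1)] assms(2), of "{a}"] by simp

lemma card_image_le: "|A| \<le>o k \<Longrightarrow> |f ` A| \<le>o k"
  using card_of_image ordLeq_transitive by blast

lemma cprod_inf_card_max:
  assumes k1: "inf_card k1" and k2: "inf_card k2"
  obtains m where "m = k1 \<or> m = k2" "k1 \<le>o m" "k2 \<le>o m" "ordIso2 (k1 *c k2) m"
proof -
  have ci: "Cinfinite k1" "Cinfinite k2"
    using k1 k2 by (auto simp: inf_card_def cinfinite_def)
  have wo: "Well_order k1" "Well_order k2"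
    using k1 k2 by (auto simp: inf_card_def card_order_on_def)
  consider "k1 \<le>o k2" | "k2 \<le>o k1"
    using ordLeq_total[OF wo] by blast
  then show thesis
  proof cases
    case 1
    then show thesis
      using that[of k2] cprod_infinite2'[OF Cinfinite_Cnotzero[OF ci(1)] ci(2)]
        ordLeq_reflexive wo by blast
  next
    case 2
    then show thesis
      using that[of k1] cprod_infinite1'[OF ci(1) Cinfinite_Cnotzero[OF ci(2)]]
        ordLeq_reflexive wo by blast
  qed
qed

section \<open>Lindeloef property of subsets\<close>

definition lindelof_in :: "'a topology \<Rightarrow> 'a set \<Rightarrow> 'k rel \<Rightarrow> bool" where
  "lindelof_in X S k \<longleftrightarrow>
     (\<forall>U. (\<forall>u\<in>U. openin X u) \<and> topspace X \<inter> S \<subseteq> \<Union>U \<longrightarrow>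
        (\<exists>V\<subseteq>U. topspace X \<inter> S \<subseteq> \<Union>V \<and> |V| \<le>o k))"

lemma lindelof_le_subtopology:
  "lindelof_le (subtopology X S) k \<longleftrightarrow> lindelof_in X S k"
proof
  assume L: "lindelof_le (subtopology X S) k"
  show "lindelof_in X S k"
    unfolding lindelof_in_def
  proof (intro allI impI, elim conjE)
    fix U assume U_open: "\<forall>u\<in>U. openin X u" and U_cover: "topspace X \<inter> S \<subseteq> \<Union>U"
    let ?trace = "\<lambda>u. u \<inter> S"
    have "\<forall>u\<in>?trace ` U. openin (subtopology X S) u"
      using U_open by (auto simp: openin_subtopology)
    moreover have "topspace (subtopology X S) \<subseteq> \<Union>(?trace ` U)"
      using U_cover by auto
    ultimately obtain V0 where V0: "V0 \<subseteq> ?trace ` U"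
      "topspace (subtopology X S) \<subseteq> \<Union>V0" "|V0| \<le>o k"
      using L[unfolded lindelof_le_def, rule_format, of "?trace ` U"] by blast
    then obtain V where V: "V \<subseteq> U" "inj_on ?trace V" "V0 = ?trace ` V"
      by (meson subset_image_inj)
    have "|V| \<le>o |V0|"
      using V(2,3) card_of_ordLeq[of V V0] by auto
    then have "|V| \<le>o k"
      using V0(3) ordLeq_transitive by blast
    moreover have "topspace X \<inter> S \<subseteq> \<Union>V"
      using V0(2) V(3) by auto
    ultimately show "\<exists>V\<subseteq>U. topspace X \<inter> S \<subseteq> \<Union>V \<and> |V| \<le>o k"
      using V(1) by blast
  qed
next
  assume L: "lindelof_in X S k"
  show "lindelof_le (subtopology X S) k"
    unfolding lindelof_le_def
  proof (intro allI impI, elim conjE)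
    fix U assume U_open: "\<forall>u\<in>U. openin (subtopology X S) u"
      and U_cover: "topspace (subtopology X S) \<subseteq> \<Union>U"
    define U' where "U' = {t. openin X t \<and> t \<inter> S \<in> U}"
    have "topspace X \<inter> S \<subseteq> \<Union>U'"
    proof
      fix z assume z: "z \<in> topspace X \<inter> S"
      then obtain u where "u \<in> U" "z \<in> u"
        using U_cover by auto
      moreover obtain t where "openin X t" "u = t \<inter> S"
        using U_open \<open>u \<in> U\<close> by (auto simp: openin_subtopology)
      ultimately show "z \<in> \<Union>U'"
        unfolding U'_def by auto
    qed
    then obtain V' where V': "V' \<subseteq> U'" "topspace X \<inter> S \<subseteq> \<Union>V'" "|V'| \<le>o k"
      using L[unfolded lindelof_in_def, rule_format, of U'] unfolding U'_def by blast
    let ?V = "(\<lambda>t. t \<inter> S) ` V'"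
    have "?V \<subseteq> U" "|?V| \<le>o k"
      using V'(1,3) card_image_le unfolding U'_def by auto
    moreover have "topspace (subtopology X S) \<subseteq> \<Union>?V"
      using V'(2) by auto
    ultimately show "\<exists>V\<subseteq>U. topspace (subtopology X S) \<subseteq> \<Union>V \<and> |V| \<le>o k"
      by blast
  qed
qed

lemma lindelof_le_iff_lindelof_in: "lindelof_le X k \<longleftrightarrow> lindelof_in X (topspace X) k"
  using lindelof_le_subtopology[of X "topspace X" k] by (simp add: subtopology_topspace)

lemma lindelof_in_card_mono: "lindelof_in X S k \<Longrightarrow> k \<le>o k' \<Longrightarrow> lindelof_in X S k'"
  unfolding lindelof_in_def using ordLeq_transitive by metis

lemma pseudochar_le_card_mono: "pseudochar_le X k \<Longrightarrow> k \<le>o k' \<Longrightarrow> pseudochar_le X k'"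
  unfolding pseudochar_le_def using ordLeq_transitive by metis

lemma lindelof_in_indexed_cover:
  assumes L: "lindelof_in X S k"
    and B_open: "\<forall>i\<in>I. openin X (B i)" and B_cover: "topspace X \<inter> S \<subseteq> (\<Union>i\<in>I. B i)"
  obtains J where "J \<subseteq> I" "topspace X \<inter> S \<subseteq> (\<Union>i\<in>J. B i)" "|J| \<le>o k"
proof -
  obtain V where V: "V \<subseteq> B ` I" "topspace X \<inter> S \<subseteq> \<Union>V" "|V| \<le>o k"
    using L[unfolded lindelof_in_def, rule_format, of "B ` I"] B_open B_cover by blast
  then obtain J where J: "J \<subseteq> I" "inj_on B J" "V = B ` J"
    by (meson subset_image_inj)
  have "|J| \<le>o |V|"
    using J(2,3) card_of_ordLeq[of J V] by auto
  then show thesis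
    using that J(1) V(2,3) J(3) ordLeq_transitive by blast
qed

lemma lindelof_in_closed:
  assumes L: "lindelof_in X (topspace X) k" and w: "openin X w"
  shows "lindelof_in X (topspace X - w) k"
  unfolding lindelof_in_def
proof (intro allI impI, elim conjE)
  fix U assume U_open: "\<forall>u\<in>U. openin X u" and U_cover: "topspace X \<inter> (topspace X - w) \<subseteq> \<Union>U"
  have "\<forall>u\<in>insert w U. openin X u" "topspace X \<inter> topspace X \<subseteq> \<Union>(insert w U)"
    using U_open U_cover w by auto
  then obtain V where V: "V \<subseteq> insert w U" "topspace X \<subseteq> \<Union>V" "|V| \<le>o k"
    using L[unfolded lindelof_in_def, rule_format, of "insert w U"] by auto
  have "|V - {w}| \<le>o k"
    using V(3) card_of_mono1[of "V - {w}" V] ordLeq_transitive by blast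
  moreover have "V - {w} \<subseteq> U" "topspace X \<inter> (topspace X - w) \<subseteq> \<Union>(V - {w})"
    using V(1,2) by auto
  ultimately show "\<exists>V\<subseteq>U. topspace X \<inter> (topspace X - w) \<subseteq> \<Union>V \<and> |V| \<le>o k"
    by blast
qed

lemma lindelof_in_UN:
  assumes k: "inf_card k" and I: "|I| \<le>o k" and L: "\<forall>i\<in>I. lindelof_in X (A i) k"
  shows "lindelof_in X (\<Union>i\<in>I. A i) k"
  unfolding lindelof_in_def
proof (intro allI impI, elim conjE)
  fix U assume U_open: "\<forall>u\<in>U. openin X u" and U_cover: "topspace X \<inter> (\<Union>i\<in>I. A i) \<subseteq> \<Union>U"
  have "\<forall>i\<in>I. \<exists>V\<subseteq>U. topspace X \<inter> A i \<subseteq> \<Union>V \<and> |V| \<le>o k"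
  proof
    fix i assume "i \<in> I"
    then have "topspace X \<inter> A i \<subseteq> \<Union>U"
      using U_cover by blast
    then show "\<exists>V\<subseteq>U. topspace X \<inter> A i \<subseteq> \<Union>V \<and> |V| \<le>o k"
      using L[rule_format, OF \<open>i \<in> I\<close>, unfolded lindelof_in_def, rule_format, of U] U_open
      by blast
  qed
  then obtain V where V: "\<forall>i\<in>I. V i \<subseteq> U \<and> topspace X \<inter> A i \<subseteq> \<Union>(V i) \<and> |V i| \<le>o k"
    by (rule bchoice[elim_format]) blast
  then have V_sub: "\<And>i. i \<in> I \<Longrightarrow> V i \<subseteq> U"
    and V_cover: "\<And>i. i \<in> I \<Longrightarrow> topspace X \<inter> A i \<subseteq> \<Union>(V i)"
    and V_card: "\<And>i. i \<in> I \<Longrightarrow> |V i| \<le>o k"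
    by simp_all
  have "|\<Union>i\<in>I. V i| \<le>o k"
    using V_card by (intro inf_card_UN_le[OF k I]) blast
  moreover have "(\<Union>i\<in>I. V i) \<subseteq> U"
    using V_sub by blast
  moreover have "topspace X \<inter> (\<Union>i\<in>I. A i) \<subseteq> \<Union>(\<Union>i\<in>I. V i)"
    using V_cover by blast
  ultimately show "\<exists>V\<subseteq>U. topspace X \<inter> (\<Union>i\<in>I. A i) \<subseteq> \<Union>V \<and> |V| \<le>o k"
    by blast
qed

lemma lindelof_in_insert:
  assumes k: "inf_card k" and L: "lindelof_in X S k"
  shows "lindelof_in X (insert x S) k"
  unfolding lindelof_in_def
proof (intro allI impI, elim conjE)
  fix U assume U_open: "\<forall>u\<in>U. openin X u" and U_cover: "topspace X \<inter> insert x S \<subseteq> \<Union>U"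
  have "topspace X \<inter> S \<subseteq> \<Union>U"
    using U_cover by auto
  then obtain V where V: "V \<subseteq> U" "topspace X \<inter> S \<subseteq> \<Union>V" "|V| \<le>o k"
    using L[unfolded lindelof_in_def, rule_format, of U] U_open by auto
  obtain V1 where V1: "V1 \<subseteq> U" "finite V1" "topspace X \<inter> {x} \<subseteq> \<Union>V1"
  proof (cases "x \<in> topspace X")
    case True
    then obtain u where "u \<in> U" "x \<in> u"
      using U_cover by blast
    then show thesis
      by (intro that[of "{u}"]) auto
  next
    case False
    then show thesis
      by (intro that[of "{}"]) auto
  qed
  have "|V \<union> V1| \<le>o k"
    using inf_card_Un_le[OF k V(3) inf_card_finite_le[OF k V1(2)]] .
  moreover have "V \<union> V1 \<subseteq> U" "topspace X \<inter> insert x S \<subseteq> \<Union>(V \<union> V1)"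
    using V V1 by auto
  ultimately show "\<exists>V\<subseteq>U. topspace X \<inter> insert x S \<subseteq> \<Union>V \<and> |V| \<le>o k"
    by blast
qed

section \<open>Comparing L(X), psi(X) and L(X - {x})\<close>

lemma lindelof_le_punctured:
  assumes k: "inf_card k" and L: "lindelof_le X k" and P: "pseudochar_le X k"
  shows "lindelof_le (subtopology X (topspace X - {x})) k"
proof (cases "x \<in> topspace X")
  case False
  then show ?thesis
    using L by (simp add: subtopology_topspace)
next
  case True
  then obtain W where W: "W \<noteq> {}" "\<forall>w\<in>W. openin X w" "\<Inter>W = {x}" "|W| \<le>o k"
    using P[unfolded pseudochar_le_def, rule_format, OF True] by blast
  have punctured: "topspace X - {x} = (\<Union>w\<in>W. topspace X - w)"
    using W(1,3) by auto
  have "\<forall>w\<in>W. lindelof_in X (topspace X - w) k"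
    using lindelof_in_closed L W(2) by (auto simp: lindelof_le_iff_lindelof_in)
  then have "lindelof_in X (topspace X - {x}) k"
    unfolding punctured by (rule lindelof_in_UN[OF k W(4)])
  then show ?thesis
    by (simp add: lindelof_le_subtopology)
qed

lemma lindelof_le_of_punctured:
  assumes k: "inf_card k"
    and L: "\<forall>x\<in>topspace X. lindelof_le (subtopology X (topspace X - {x})) k"
  shows "lindelof_le X k"
proof (cases "topspace X = {}")
  case True
  have "lindelof_in X (topspace X) k"
    unfolding lindelof_in_def True using inf_card_finite_le[OF k] by blast
  then show ?thesis
    by (simp add: lindelof_le_iff_lindelof_in)
next
  case False
  then obtain x where x: "x \<in> topspace X"
    by blast
  then have "lindelof_in X (topspace X - {x}) k"
    using L by (simp add: lindelof_le_subtopology)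
  then have "lindelof_in X (insert x (topspace X - {x})) k"
    by (rule lindelof_in_insert[OF k])
  moreover have "insert x (topspace X - {x}) = topspace X"
    using x by blast
  ultimately show ?thesis
    by (simp add: lindelof_le_iff_lindelof_in)
qed

lemma Hausdorff_separating_family:
  assumes H: "Hausdorff_space X" and x: "x \<in> topspace X"
  obtains A B where "\<forall>y\<in>topspace X - {x}. openin X (A y) \<and> openin X (B y) \<and>
    x \<in> A y \<and> y \<in> B y \<and> disjnt (A y) (B y)"
proof -
  have "\<forall>y\<in>topspace X - {x}. \<exists>p. openin X (fst p) \<and> openin X (snd p) \<and>
      x \<in> fst p \<and> y \<in> snd p \<and> disjnt (fst p) (snd p)"
  proof
    fix y assume "y \<in> topspace X - {x}"
    then obtain A B where "openin X A" "openin X B" "x \<in> A" "y \<in> B" "disjnt A B"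
      using H x unfolding Hausdorff_space_def by blast
    then show "\<exists>p. openin X (fst p) \<and> openin X (snd p) \<and> x \<in> fst p \<and> y \<in> snd p \<and>
        disjnt (fst p) (snd p)"
      by (intro exI[of _ "(A, B)"]) simp
  qed
  then obtain p where "\<forall>y\<in>topspace X - {x}. openin X (fst (p y)) \<and> openin X (snd (p y)) \<and>
      x \<in> fst (p y) \<and> y \<in> snd (p y) \<and> disjnt (fst (p y)) (snd (p y))"
    by (rule bchoice[elim_format]) blast
  then show thesis
    by (intro that[of "\<lambda>y. fst (p y)" "\<lambda>y. snd (p y)"])
qed

lemma pseudochar_le_of_punctured:
  assumes H: "Hausdorff_space X" and k: "inf_card k"
    and L: "\<forall>x\<in>topspace X. lindelof_le (subtopology X (topspace X - {x})) k"
  shows "pseudochar_le X k"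
  unfolding pseudochar_le_def
proof
  fix x assume x: "x \<in> topspace X"
  define S where "S = topspace X - {x}"
  obtain A B where AB: "\<forall>y\<in>S. openin X (A y) \<and> openin X (B y) \<and>
      x \<in> A y \<and> y \<in> B y \<and> disjnt (A y) (B y)"
    using Hausdorff_separating_family[OF H x] unfolding S_def by blast
  have "lindelof_in X S k"
    using L x by (simp add: S_def lindelof_le_subtopology)
  moreover have "topspace X \<inter> S \<subseteq> (\<Union>y\<in>S. B y)"
    using AB by blast
  ultimately obtain J where J: "J \<subseteq> S" "topspace X \<inter> S \<subseteq> (\<Union>y\<in>J. B y)" "|J| \<le>o k"
    using AB lindelof_in_indexed_cover[of X S k S B] by blast
  define W where "W = insert (topspace X) (A ` J)"
  have "|W| \<le>o k"
    unfolding W_def by (intro inf_card_insert_le[OF k] card_image_le[OF J(3)])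
  moreover have "W \<noteq> {}" "\<forall>w\<in>W. openin X w"
    unfolding W_def using AB J(1) by auto
  moreover have "\<Inter>W = {x}"
  proof
    show "{x} \<subseteq> \<Inter>W"
      unfolding W_def using AB J(1) x by auto
    show "\<Inter>W \<subseteq> {x}"
    proof
      fix z assume z: "z \<in> \<Inter>W"
      show "z \<in> {x}"
      proof (rule ccontr)
        assume "z \<notin> {x}"
        then have "z \<in> topspace X \<inter> S"
          using z unfolding W_def S_def by auto
        then obtain y where "y \<in> J" "z \<in> B y"
          using J(2) by blast
        moreover have "z \<in> A y"
          using z \<open>y \<in> J\<close> unfolding W_def by auto
        ultimately show False
          using AB J(1) unfolding disjnt_def by blast
      qed
    qed
  qed
  ultimately show "\<exists>W. W \<noteq> {} \<and> (\<forall>w\<in>W. openin X w) \<and> \<Inter>W = {x} \<and> |W| \<le>o k"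
    by blast
qed

theorem lemma2p1:
  fixes X :: "'a topology" and \<mu>L \<mu>P \<Phi> :: "'k rel"
  assumes "Hausdorff_space X"
    and "is_lindelof_number X \<mu>L"
    and "is_pseudocharacter X \<mu>P"
    and "is_Phi X \<Phi>"
  shows "ordIso2 \<Phi> (BNF_Cardinal_Arithmetic.cprod \<mu>L \<mu>P)"
proof -
  have \<mu>L: "inf_card \<mu>L" "lindelof_le X \<mu>L"
    "\<And>\<kappa>::'k rel. inf_card \<kappa> \<Longrightarrow> lindelof_le X \<kappa> \<Longrightarrow> \<mu>L \<le>o \<kappa>"
    using assms(2) unfolding is_lindelof_number_def by auto
  have \<mu>P: "inf_card \<mu>P" "pseudochar_le X \<mu>P"
    "\<And>\<kappa>::'k rel. inf_card \<kappa> \<Longrightarrow> pseudochar_le X \<kappa> \<Longrightarrow> \<mu>P \<le>o \<kappa>"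
    using assms(3) unfolding is_pseudocharacter_def by auto
  have \<Phi>: "inf_card \<Phi>" "\<forall>x\<in>topspace X. lindelof_le (subtopology X (topspace X - {x})) \<Phi>"
    "\<And>\<kappa>::'k rel. inf_card \<kappa> \<Longrightarrow>
       \<forall>x\<in>topspace X. lindelof_le (subtopology X (topspace X - {x})) \<kappa> \<Longrightarrow> \<Phi> \<le>o \<kappa>"
    using assms(4) unfolding is_Phi_def by auto
  obtain m where m: "m = \<mu>L \<or> m = \<mu>P" "\<mu>L \<le>o m" "\<mu>P \<le>o m" "ordIso2 (\<mu>L *c \<mu>P) m"
    using cprod_inf_card_max[OF \<mu>L(1) \<mu>P(1)] by blast
  have m_inf: "inf_card m"
    using m(1) \<mu>L(1) \<mu>P(1) by auto
  have L_m: "lindelof_le X m"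
    using lindelof_in_card_mono[OF _ m(2)] \<mu>L(2) by (simp add: lindelof_le_iff_lindelof_in)
  have P_m: "pseudochar_le X m"
    using pseudochar_le_card_mono[OF \<mu>P(2) m(3)] .
  have "\<Phi> \<le>o m"
    by (intro \<Phi>(3)[OF m_inf] ballI lindelof_le_punctured[OF m_inf L_m P_m])
  moreover have "\<mu>L \<le>o \<Phi>"
    by (intro \<mu>L(3)[OF \<Phi>(1)] lindelof_le_of_punctured[OF \<Phi>(1,2)])
  moreover have "\<mu>P \<le>o \<Phi>"
    by (intro \<mu>P(3)[OF \<Phi>(1)] pseudochar_le_of_punctured[OF assms(1) \<Phi>(1,2)])
  ultimately have "ordIso2 \<Phi> m"
    using m(1) by (auto simp: ordIso_iff_ordLeq)
  then show ?thesis
    using m(4) ordIso_symmetric ordIso_transitive by blast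
qed

end
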